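(* Let $\mathcal{G}=(\mathcal{V},\mathcal{E})$ be a connected undirected graph with $n$ vertices and $m$ edges, with incidence matrix $B\in\mathbb{R}^{n\times m}$ (for an arbitrary orientation of the edges), and let $\Gamma=\mathrm{diag}(\gamma_1,\dots,\gamma_m)$ with $\gamma_k>0$. Let $\mathcal{V}=\mathcal{V}_1\cup\mathcal{V}_2$ be a partition into disjoint nonempty sets and write $B=\begin{bmatrix}B_1\\ B_2\end{bmatrix}$ accordingly, $B_1\in\mathbb{R}^{|\mathcal{V}_1|\times m}$, $B_2\in\mathbb{R}^{|\mathcal{V}_2|\times m}$. Define $$L_S=B_1\Gamma B_1^T-B_1\Gamma B_2^T(B_2\Gamma B_2^T)^{-1}B_2\Gamma B_1^T,$$ $B_2^+=\Gamma B_2^T(B_2\Gamma B_2^T)^{-1}$ and the projected incidence matrix $B_S=B_1(I-B_2^+B_2)\in\mathbb{R}^{|\mathcal{V}_1|\times m}$. Then: (i) $\operatorname{im}\mathbb{1}=\ker B_S^T$, where $\mathbb{1}$ is the all-ones vector in $\mathbb{R}^{|\mathcal{V}_1|}$; (ii) $B_S\Gamma B_2^T=0$; (iii) $L_S=B_S\Gamma B_1^T$; (iv) $L_S=B_S\Gamma B_S^T$.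
   Context: The incidence matrix $B$ has entries $b_{ik}=+1$ if vertex $i$ is the tail of edge $k$, $-1$ if $i$ is the head of edge $k$, and $0$ otherwise. $L_S$ is the Schur complement of the weighted Laplacian $L=B\Gamma B^T$ with respect to the block indexed by $\mathcal{V}_2$; $B_2\Gamma B_2^T$ is invertible since $\mathcal{G}$ is connected. *)

theory Defs
  imports "HOL-Analysis.Analysis"
begin

definition incidence_matrix :: "('e::finite \<Rightarrow> 'v::finite) \<Rightarrow> ('e \<Rightarrow> 'v) \<Rightarrow> real^'e^'v" where
  "incidence_matrix src tgt =
     (\<chi> i k. if i = src k then 1 else if i = tgt k then -1 else 0)"

definition simple_oriented_graph :: "('e \<Rightarrow> 'v) \<Rightarrow> ('e \<Rightarrow> 'v) \<Rightarrow> bool" where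
  "simple_oriented_graph src tgt \<longleftrightarrow>
     (\<forall>k. src k \<noteq> tgt k) \<and>
     (\<forall>k l. {src k, tgt k} = {src l, tgt l} \<longrightarrow> k = l)"

definition adjacent :: "('e \<Rightarrow> 'v) \<Rightarrow> ('e \<Rightarrow> 'v) \<Rightarrow> 'v \<Rightarrow> 'v \<Rightarrow> bool" where
  "adjacent src tgt u v \<longleftrightarrow> (\<exists>k. (src k = u \<and> tgt k = v) \<or> (src k = v \<and> tgt k = u))"

definition graph_connected :: "('e \<Rightarrow> 'v) \<Rightarrow> ('e \<Rightarrow> 'v) \<Rightarrow> bool" where
  "graph_connected src tgt \<longleftrightarrow> (\<forall>u v. (adjacent src tgt)\<^sup>*\<^sup>* u v)"

definition diag_mat :: "('e::finite \<Rightarrow> real) \<Rightarrow> real^'e^'e" where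
  "diag_mat g = (\<chi> i j. if i = j then g i else 0)"

end

theory Submission
  imports Defs
begin

text \<open>The Gram matrix \<open>B\<^sub>2 \<Gamma> B\<^sub>2\<^sup>T\<close> is invertible because \<open>\<Gamma>\<close> is positive and
  \<open>B\<^sub>2\<^sup>T\<close> is injective: a vector in \<open>ker B\<^sup>T\<close> is constant on the connected graph, so
  one that vanishes on \<open>V\<^sub>1\<close> vanishes everywhere. Hence \<open>B\<^sub>2 B\<^sub>2\<^sup>+ = I\<close>, and
  (ii)--(iv) are pure matrix algebra. For (i), \<open>B\<^sub>S\<^sup>T x = 0\<close> holds exactly when
  \<open>B\<^sub>1\<^sup>T x + B\<^sub>2\<^sup>T z = 0\<close> for some \<open>z\<close>, i.e. when \<open>x\<close> extends to a vector in
  \<open>ker B\<^sup>T\<close>, i.e. to a constant vector.\<close>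

lemma matrix_diff_ldistrib: "(A::'k::ring_1^'n^'m) ** (B - C) = A ** B - A ** C"
  by (simp add: matrix_matrix_mult_def vec_eq_iff algebra_simps sum_subtractf)

lemma matrix_diff_rdistrib: "((A::'k::ring_1^'n^'m) - B) ** C = A ** C - B ** C"
  by (simp add: matrix_matrix_mult_def vec_eq_iff algebra_simps sum_subtractf)

lemma transpose_diff: "transpose ((A::'k::ring_1^'n^'m) - B) = transpose A - transpose B"
  by (simp add: transpose_def vec_eq_iff)

lemma matrix_vector_mult_minus: "(A::'k::ring_1^'n^'m) *v (- x) = - (A *v x)"
  by (metis diff_0 matrix_vector_mult_diff_distrib matrix_vector_mult_0_right)

lemma invertible_matrix_inv:
  fixes A :: "'k::field^'n^'n"
  assumes "invertible A"
  shows "A ** matrix_inv A = mat 1" and "matrix_inv A ** A = mat 1"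
proof -
  have "A ** matrix_inv A = mat 1 \<and> matrix_inv A ** A = mat 1"
    using assms unfolding invertible_def matrix_inv_def by (rule someI_ex)
  then show "A ** matrix_inv A = mat 1" and "matrix_inv A ** A = mat 1" by simp_all
qed

definition weighted_pseudoinverse :: "'k::field^'e^'e \<Rightarrow> 'k^'e^'b \<Rightarrow> 'k^'b^'e" where
  "weighted_pseudoinverse G A = G ** transpose A ** matrix_inv (A ** G ** transpose A)"

definition projected_matrix :: "'k::field^'e^'e \<Rightarrow> 'k^'e^'b \<Rightarrow> 'k^'e^'a \<Rightarrow> 'k^'e^'a" where
  "projected_matrix G A2 A1 = A1 ** (mat 1 - weighted_pseudoinverse G A2 ** A2)"

lemma weighted_pseudoinverse_right_inverse:
  assumes "invertible (A ** G ** transpose A)"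
  shows "A ** weighted_pseudoinverse G A = mat 1"
  using invertible_matrix_inv(1)[OF assms]
  by (simp add: weighted_pseudoinverse_def matrix_mul_assoc)

lemma projected_matrix_annihilates:
  assumes "invertible (A2 ** G ** transpose A2)"
  shows "projected_matrix G A2 A1 ** G ** transpose A2 = 0"
proof -
  have "matrix_inv (A2 ** G ** transpose A2) ** (A2 ** (G ** transpose A2)) = mat 1"
    using invertible_matrix_inv(2)[OF assms] by (simp add: matrix_mul_assoc)
  then have "A1 ** weighted_pseudoinverse G A2 ** A2 ** G ** transpose A2 = A1 ** G ** transpose A2"
    by (simp add: weighted_pseudoinverse_def matrix_mul_assoc[symmetric])
  then show ?thesis
    by (simp add: projected_matrix_def matrix_diff_ldistrib matrix_diff_rdistrib matrix_mul_assoc)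
qed

lemma schur_complement_eq_projected:
  "A1 ** G ** transpose A1
     - A1 ** G ** transpose A2 ** matrix_inv (A2 ** G ** transpose A2) ** A2 ** G ** transpose A1
   = projected_matrix G A2 A1 ** G ** transpose A1"
  by (simp add: projected_matrix_def weighted_pseudoinverse_def matrix_diff_ldistrib
      matrix_diff_rdistrib matrix_mul_assoc)

lemma projected_matrix_gram:
  assumes "invertible (A2 ** G ** transpose A2)"
  shows "projected_matrix G A2 A1 ** G ** transpose A1
       = projected_matrix G A2 A1 ** G ** transpose (projected_matrix G A2 A1)"
proof -
  let ?S = "projected_matrix G A2 A1" and ?P = "weighted_pseudoinverse G A2"
  have "?S ** G ** transpose ?S
      = ?S ** G ** transpose A1 - ?S ** G ** transpose A2 ** transpose ?P ** transpose A1"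
    by (simp add: projected_matrix_def transpose_diff matrix_transpose_mul matrix_diff_ldistrib
        matrix_diff_rdistrib matrix_mul_assoc)
  also have "\<dots> = ?S ** G ** transpose A1"
    using projected_matrix_annihilates[OF assms, of A1] by simp
  finally show ?thesis ..
qed

lemma projected_matrix_transpose_kernel:
  assumes "invertible (A2 ** G ** transpose A2)"
  shows "transpose (projected_matrix G A2 A1) *v x = 0
     \<longleftrightarrow> (\<exists>z. transpose A1 *v x + transpose A2 *v z = 0)"
proof -
  let ?P = "weighted_pseudoinverse G A2"
  have PA2: "transpose ?P ** transpose A2 = mat 1"
    using arg_cong[OF weighted_pseudoinverse_right_inverse[OF assms], of transpose]
    by (simp add: matrix_transpose_mul)
  have S: "transpose (projected_matrix G A2 A1) *v x
      = transpose A1 *v x - transpose A2 *v (transpose ?P *v (transpose A1 *v x))"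
    by (simp add: projected_matrix_def transpose_diff matrix_transpose_mul matrix_diff_rdistrib
        matrix_vector_mult_diff_rdistrib matrix_vector_mul_assoc matrix_mul_assoc
        del: transpose_matrix_vector)
  show ?thesis
  proof
    assume "transpose (projected_matrix G A2 A1) *v x = 0"
    then have "transpose A1 *v x + transpose A2 *v (- (transpose ?P *v (transpose A1 *v x))) = 0"
      by (simp add: S matrix_vector_mult_minus del: transpose_matrix_vector)
    then show "\<exists>z. transpose A1 *v x + transpose A2 *v z = 0" ..
  next
    assume "\<exists>z. transpose A1 *v x + transpose A2 *v z = 0"
    then obtain z where "transpose A1 *v x = - (transpose A2 *v z)"
      by (metis add.commute add_eq_0_iff)
    moreover have "transpose ?P *v (transpose A2 *v z) = z"
      by (simp add: matrix_vector_mul_assoc PA2 del: transpose_matrix_vector)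
    ultimately show "transpose (projected_matrix G A2 A1) *v x = 0"
      by (simp add: S matrix_vector_mult_minus del: transpose_matrix_vector)
  qed
qed

lemma incidence_matrix_transpose_mult:
  assumes "src k \<noteq> tgt k"
  shows "(transpose (incidence_matrix src tgt) *v y) $ k = y $ src k - y $ tgt k"
proof -
  have "\<And>v. (if v = src k then 1 else if v = tgt k then -1 else 0) * y $ v
      = (if v = src k then y $ src k else 0) - (if v = tgt k then y $ tgt k else 0)"
    using assms by auto
  then show ?thesis
    unfolding matrix_vector_mult_def transpose_def incidence_matrix_def
    by (simp add: sum_subtractf)
qed

lemma graph_connected_constant:
  assumes "graph_connected src tgt" and "\<forall>k. f (src k) = f (tgt k)"
  shows "f u = f v"
proof -
  have "(adjacent src tgt)\<^sup>*\<^sup>* u v"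
    using assms(1) by (simp add: graph_connected_def)
  then show ?thesis
    by (induction rule: rtranclp_induct) (use assms(2) in \<open>auto simp: adjacent_def\<close>)
qed

lemma incidence_matrix_transpose_kernel:
  assumes "\<forall>k. src k \<noteq> tgt k" and "graph_connected src tgt"
  shows "transpose (incidence_matrix src tgt) *v y = 0 \<longleftrightarrow> (\<forall>u v. y $ u = y $ v)"
proof
  assume "transpose (incidence_matrix src tgt) *v y = 0"
  then have "\<forall>k. y $ src k = y $ tgt k"
    using incidence_matrix_transpose_mult assms(1) by (metis eq_iff_diff_eq_0 zero_index)
  then show "\<forall>u v. y $ u = y $ v"
    using graph_connected_constant[OF assms(2)] by blast
next
  assume "\<forall>u v. y $ u = y $ v"
  then show "transpose (incidence_matrix src tgt) *v y = 0"
    using assms(1)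
    by (simp add: vec_eq_iff incidence_matrix_transpose_mult del: transpose_matrix_vector)
qed

definition vec_join :: "'k^'a \<Rightarrow> 'k^'b \<Rightarrow> 'k^('a + 'b)" where
  "vec_join x z = (\<chi> v. case_sum (($) x) (($) z) v)"

lemma vec_join_nth [simp]:
  "vec_join x z $ Inl i = x $ i" "vec_join x z $ Inr j = z $ j"
  by (simp_all add: vec_join_def)

lemma transpose_mult_vec_join:
  fixes B :: "'k::comm_semiring_1^'e^('a::finite + 'b::finite)"
  shows "transpose B *v vec_join x z
       = transpose (\<chi> i k. B $ Inl i $ k) *v x + transpose (\<chi> j k. B $ Inr j $ k) *v z"
  unfolding matrix_vector_mult_def transpose_def
  by (simp add: vec_eq_iff UNIV_Plus_UNIV[symmetric] sum.Plus comp_def del: UNIV_Plus_UNIV)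

lemma vec_join_constant_iff:
  "(\<exists>z::real^'b. \<forall>u v. vec_join x z $ u = vec_join x z $ v)
     \<longleftrightarrow> x \<in> range (\<lambda>c. c *\<^sub>R (\<chi> i. 1))"
proof
  assume "\<exists>z::real^'b. \<forall>u v. vec_join x z $ u = vec_join x z $ v"
  then obtain z :: "real^'b" where "\<forall>u v. vec_join x z $ u = vec_join x z $ v" ..
  then have "x = (x $ undefined) *\<^sub>R (\<chi> i. 1)"
    by (simp add: vec_eq_iff) (metis vec_join_nth(1))
  then show "x \<in> range (\<lambda>c. c *\<^sub>R (\<chi> i. 1))" by blast
next
  assume "x \<in> range (\<lambda>c. c *\<^sub>R (\<chi> i. 1))"
  then obtain c where "x = c *\<^sub>R (\<chi> i. 1)" by blast
  then have "\<forall>u v. vec_join x (c *\<^sub>R (\<chi> i. 1) :: real^'b) $ u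
                = vec_join x (c *\<^sub>R (\<chi> i. 1) :: real^'b) $ v"
    by (auto simp: vec_join_def split: sum.split)
  then show "\<exists>z::real^'b. \<forall>u v. vec_join x z $ u = vec_join x z $ v" ..
qed

lemma invertible_weighted_gram:
  fixes A :: "real^'e^'n"
  assumes pos: "\<forall>k. g k > 0" and inj: "\<And>x. transpose A *v x = 0 \<Longrightarrow> x = 0"
  shows "invertible (A ** diag_mat g ** transpose A)"
proof -
  have "x = 0" if "(A ** diag_mat g ** transpose A) *v x = 0" for x
  proof -
    define u where "u = transpose A *v x"
    have "(\<Sum>k\<in>UNIV. g k * (u $ k)\<^sup>2) = inner u (diag_mat g *v u)"
      by (simp add: diag_mat_def matrix_vector_mult_def inner_vec_def power2_eq_square
          if_distrib if_distribR mult_ac cong: if_cong)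
    also have "\<dots> = inner (x v* A) (diag_mat g *v u)"
      by (simp add: u_def)
    also have "\<dots> = inner x ((A ** diag_mat g ** transpose A) *v x)"
      by (simp only: u_def dot_lmul_matrix matrix_vector_mul_assoc matrix_mul_assoc)
    finally have "(\<Sum>k\<in>UNIV. g k * (u $ k)\<^sup>2) = 0"
      using that by simp
    then have "\<forall>k. g k * (u $ k)\<^sup>2 = 0"
      using pos by (simp add: sum_nonneg_eq_0_iff less_imp_le)
    then have "u = 0"
      using pos by (simp add: vec_eq_iff) (metis less_irrefl)
    then show "x = 0" using inj unfolding u_def by blast
  qed
  then show ?thesis
    using matrix_left_invertible_ker invertible_left_inverse by blast
qed

theorem proposition1:
  fixes src tgt :: "'e::finite \<Rightarrow> ('a::finite + 'b::finite)"
    and \<gamma> :: "'e \<Rightarrow> real"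
    and B :: "real^'e^('a + 'b)" and B1 :: "real^'e^'a" and B2 :: "real^'e^'b"
    and \<Gamma> :: "real^'e^'e" and LS :: "real^'a^'a"
    and B2p :: "real^'b^'e" and BS :: "real^'e^'a"
  assumes simple: "simple_oriented_graph src tgt"
    and conn: "graph_connected src tgt"
    and pos: "\<forall>k. \<gamma> k > 0"
  defines "B \<equiv> incidence_matrix src tgt"
    and "B1 \<equiv> (\<chi> i k. B $ Inl i $ k)"
    and "B2 \<equiv> (\<chi> i k. B $ Inr i $ k)"
    and "\<Gamma> \<equiv> diag_mat \<gamma>"
    and "LS \<equiv> B1 ** \<Gamma> ** transpose B1
              - B1 ** \<Gamma> ** transpose B2 ** matrix_inv (B2 ** \<Gamma> ** transpose B2) ** B2 ** \<Gamma> ** transpose B1"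
    and "B2p \<equiv> \<Gamma> ** transpose B2 ** matrix_inv (B2 ** \<Gamma> ** transpose B2)"
    and "BS \<equiv> B1 ** (mat 1 - B2p ** B2)"
  shows "range (\<lambda>c::real. c *\<^sub>R (\<chi> i. 1 :: real^'a)) = {x. transpose BS *v x = 0}
       \<and> BS ** \<Gamma> ** transpose B2 = 0
       \<and> LS = BS ** \<Gamma> ** transpose B1
       \<and> LS = BS ** \<Gamma> ** transpose BS"
proof -
  have loopfree: "\<forall>k. src k \<noteq> tgt k"
    using simple by (simp add: simple_oriented_graph_def)
  have kernel_B: "transpose B *v vec_join x z = 0 \<longleftrightarrow> (\<forall>u v. vec_join x z $ u = vec_join x z $ v)"
    for x z
    unfolding B_def by (rule incidence_matrix_transpose_kernel[OF loopfree conn])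
  have blocks: "transpose B *v vec_join x z = transpose B1 *v x + transpose B2 *v z" for x z
    unfolding B1_def B2_def by (rule transpose_mult_vec_join)
  have "z = 0" if "transpose B2 *v z = 0" for z
  proof -
    have "transpose B *v vec_join (0::real^'a) z = 0"
      using that by (simp add: blocks del: transpose_matrix_vector)
    then have "\<forall>u v. vec_join (0::real^'a) z $ u = vec_join (0::real^'a) z $ v"
      by (rule kernel_B[THEN iffD1])
    then have "z $ j = 0" for j
      by (metis vec_join_nth zero_index)
    then show ?thesis by (simp add: vec_eq_iff)
  qed
  then have inv: "invertible (B2 ** \<Gamma> ** transpose B2)"
    unfolding \<Gamma>_def by (rule invertible_weighted_gram[OF pos])
  have BS_proj: "BS = projected_matrix \<Gamma> B2 B1"
    unfolding BS_def B2p_def projected_matrix_def weighted_pseudoinverse_def ..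
  have LS_proj: "LS = BS ** \<Gamma> ** transpose B1"
    unfolding LS_def BS_proj by (rule schur_complement_eq_projected)
  have "transpose BS *v x = 0 \<longleftrightarrow> x \<in> range (\<lambda>c. c *\<^sub>R (\<chi> i. 1))" for x
    unfolding BS_proj projected_matrix_transpose_kernel[OF inv] blocks[symmetric] kernel_B
    by (rule vec_join_constant_iff)
  then show ?thesis
    using LS_proj projected_matrix_annihilates[OF inv] projected_matrix_gram[OF inv]
    unfolding BS_proj by auto
qed

end
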